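(* Let $a,b,g,m,n>0$ and $0<e<1$, and consider the planar system $$\dot x=a-ex-\frac{xy}{1+gy},\qquad \dot y=\frac{xy}{1+gy}-y-\frac{my}{b+ny}.$$ Let $a_1=(eg+1)n$, $a_2=(b+m)(eg+1)+n(e-a)$, $a_3=e(b+m)-ab$, $\Delta=a_2^2-4a_1a_3$, and $$a_4=\frac{[en-(b-m)(eg+1)]+\sqrt{4m(eg+1)[ne-b(eg+1)]}}{n}.$$ Suppose $n>\frac{(eg+1)b^2+m(eg+1)b}{me}$ and $a_4<a<\frac{e(m+b)}{b}$. Let $y_2=\frac{-a_2-\sqrt{\Delta}}{2a_1}$ and $x_2=\frac{a(1+gy_2)}{e+(eg+1)y_2}$, so that $E_2=(x_2,y_2)$ is an endemic equilibrium of the system. Then $E_2$ is a saddle point.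
   Context: The system is a rescaled SIR epidemic model with saturated infection rate and saturated treatment rate. *)

theory Defs
  imports "HOL-Analysis.Analysis"
begin

definition sir_field :: "real \<Rightarrow> real \<Rightarrow> real \<Rightarrow> real \<Rightarrow> real \<Rightarrow> real
    \<Rightarrow> real \<times> real \<Rightarrow> real \<times> real" where
  "sir_field a b e g m n = (\<lambda>(x, y).
      (a - e * x - x * y / (1 + g * y),
       x * y / (1 + g * y) - y - m * y / (b + n * y)))"

definition saddle_point :: "(real \<times> real \<Rightarrow> real \<times> real) \<Rightarrow> real \<times> real \<Rightarrow> bool" where
  "saddle_point F p \<longleftrightarrow> F p = 0 \<and>
     (\<exists>L. (F has_derivative L) (at p) \<and>
        (\<exists>l1 l2 v1 v2. l1 < 0 \<and> 0 < l2 \<and> v1 \<noteq> 0 \<and> v2 \<noteq> 0 \<and>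
            L v1 = l1 *\<^sub>R v1 \<and> L v2 = l2 *\<^sub>R v2))"

end

theory Submission
  imports Defs
begin

text \<open>Eliminating \<open>x\<close> from the equilibrium equations leaves the quadratic
\<open>P y = a1 y\<^sup>2 + a2 y + a3\<close>, and at any endemic equilibrium the Jacobian
determinant equals \<open>y P'(y) / ((1 + g y) (b + n y))\<close>. The thresholds on \<open>n\<close> and
\<open>a\<close> give \<open>a1 > 0\<close>, \<open>a2 < 0\<close>, \<open>a3 > 0\<close> and \<open>\<Delta> > 0\<close>, so \<open>y2\<close> is the smaller of two
positive roots and \<open>P'(y2) = - sqrt \<Delta> < 0\<close>. A real \<open>2 \<times> 2\<close> matrix with negative
determinant has real eigenvalues of opposite signs, hence \<open>E2\<close> is a saddle.\<close>

lemma matrix2_root_is_eigenvalue: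
  fixes A B C D l :: real
  assumes "l\<^sup>2 - (A + D) * l + (A * D - B * C) = 0"
  obtains v :: "real \<times> real" where "v \<noteq> 0"
    and "(\<lambda>(u, v). (A * u + B * v, C * u + D * v)) v = l *\<^sub>R v"
proof (cases "(l - D, C) = 0")
  case False
  have "A * (l - D) + B * C = l * (l - D)"
    using assms by (simp add: algebra_simps power2_eq_square)
  with False show ?thesis
    by (intro that[of "(l - D, C)"]) (simp_all add: algebra_simps)
next
  case True
  then have "l = D" "C = 0"
    by (auto simp: prod_eq_iff)
  show ?thesis
  proof (cases "(B, l - A) = 0")
    case False
    with \<open>l = D\<close> \<open>C = 0\<close> show ?thesis
      by (intro that[of "(B, l - A)"]) (simp_all add: algebra_simps)
  next
    case True
    with \<open>l = D\<close> \<open>C = 0\<close> show ?thesis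
      by (intro that[of "(1, 0)"]) (auto simp: prod_eq_iff)
  qed
qed

lemma matrix2_neg_det_saddle:
  fixes A B C D :: real
  assumes "A * D - B * C < 0"
  shows "\<exists>l1 l2 v1 v2. l1 < 0 \<and> 0 < l2 \<and> v1 \<noteq> 0 \<and> v2 \<noteq> 0 \<and>
    (\<lambda>(u, v). (A * u + B * v, C * u + D * v)) v1 = l1 *\<^sub>R v1 \<and>
    (\<lambda>(u, v). (A * u + B * v, C * u + D * v)) v2 = l2 *\<^sub>R v2"
proof -
  define T where "T = A + D"
  define R where "R = sqrt (T\<^sup>2 - 4 * (A * D - B * C))"
  have disc: "0 < T\<^sup>2 - 4 * (A * D - B * C)"
    using assms zero_le_power2[of T] by argo
  have R2: "R\<^sup>2 = T\<^sup>2 - 4 * (A * D - B * C)"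
    unfolding R_def using disc by simp
  have "\<bar>T\<bar> < R"
  proof (rule power2_less_imp_less)
    show "\<bar>T\<bar>\<^sup>2 < R\<^sup>2" using R2 assms by simp
    show "0 \<le> R" unfolding R_def using disc by simp
  qed
  then have neg: "(T - R) / 2 < 0" and pos: "0 < (T + R) / 2"
    by auto
  have q1: "((T - R) / 2)\<^sup>2 - (A + D) * ((T - R) / 2) + (A * D - B * C) = 0"
    and q2: "((T + R) / 2)\<^sup>2 - (A + D) * ((T + R) / 2) + (A * D - B * C) = 0"
    using R2 unfolding T_def by (simp_all add: power2_eq_square field_simps)
  obtain v1 where "v1 \<noteq> 0"
    and "(\<lambda>(u, v). (A * u + B * v, C * u + D * v)) v1 = ((T - R) / 2) *\<^sub>R v1"
    using matrix2_root_is_eigenvalue[OF q1] .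
  moreover obtain v2 where "v2 \<noteq> 0"
    and "(\<lambda>(u, v). (A * u + B * v, C * u + D * v)) v2 = ((T + R) / 2) *\<^sub>R v2"
    using matrix2_root_is_eigenvalue[OF q2] .
  ultimately show ?thesis
    using neg pos by blast
qed

lemma quadratic_smaller_root:
  fixes p q r :: real
  assumes p: "0 < p" and q: "q < 0" and r: "0 < r" and disc: "0 < q\<^sup>2 - 4 * p * r"
  defines "y \<equiv> (- q - sqrt (q\<^sup>2 - 4 * p * r)) / (2 * p)"
  shows "0 < y" and "p * y\<^sup>2 + q * y + r = 0" and "2 * p * y + q < 0"
proof -
  define s where "s = sqrt (q\<^sup>2 - 4 * p * r)"
  have s2: "s\<^sup>2 = q\<^sup>2 - 4 * p * r" and s0: "0 < s"
    unfolding s_def using disc by simp_all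
  have "s\<^sup>2 < (- q)\<^sup>2"
    using s2 p r by simp
  then have "s < - q"
    using q by (simp add: power2_less_imp_less)
  then show "0 < y"
    unfolding y_def s_def[symmetric] using p by simp
  have lin: "2 * p * y + q = - s"
    unfolding y_def s_def[symmetric] using p by (simp add: field_simps)
  then show "2 * p * y + q < 0"
    using s0 by simp
  have "4 * p * (p * y\<^sup>2 + q * y + r) = (2 * p * y + q)\<^sup>2 - (q\<^sup>2 - 4 * p * r)"
    by (simp add: algebra_simps power2_eq_square)
  also have "\<dots> = 0"
    unfolding lin using s2 by simp
  finally show "p * y\<^sup>2 + q * y + r = 0"
    using p by simp
qed

text \<open>Here \<open>k\<close> stands for \<open>e g + 1\<close>.\<close>

lemma threshold_coefficient_signs:
  fixes a b e k m n :: real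
  assumes "0 < b" "0 < m" "0 < n" "0 < e" "0 < k"
    and n_gt: "n > (k * b\<^sup>2 + m * k * b) / (m * e)"
    and a_gt: "(e * n - (b - m) * k + sqrt (4 * m * k * (n * e - b * k))) / n < a"
  shows "(b + m) * k + n * (e - a) < 0"
    and "0 < ((b + m) * k + n * (e - a))\<^sup>2 - 4 * (k * n) * (e * (b + m) - a * b)"
proof -
  define S where "S = sqrt (4 * m * k * (n * e - b * k))"
  have margin: "k * b\<^sup>2 < m * (n * e - b * k)"
    using n_gt assms(2,4) by (simp add: field_simps power2_eq_square)
  moreover have "0 < k * b\<^sup>2"
    using assms by simp
  ultimately have pos: "0 < n * e - b * k"
    using assms(2) zero_less_mult_pos[of m "n * e - b * k"] by linarith
  have S2_gt: "(2 * k * b)\<^sup>2 < 4 * m * k * (n * e - b * k)"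
    using mult_strict_left_mono[OF margin, of "4 * k"] assms(5)
    by (simp add: power2_eq_square algebra_simps)
  have S2: "S\<^sup>2 = 4 * m * k * (n * e - b * k)" and "0 \<le> S"
    unfolding S_def using pos assms by simp_all
  have "2 * k * b < S"
    using S2 S2_gt \<open>0 \<le> S\<close> by (simp add: power2_less_imp_less)
  moreover have na_gt: "n * a > e * n - (b - m) * k + S"
    using a_gt assms(3) unfolding S_def by (simp add: field_simps)
  ultimately show "(b + m) * k + n * (e - a) < 0"
    by (simp add: algebra_simps)
  have "((b + m) * k + n * (e - a))\<^sup>2 - 4 * (k * n) * (e * (b + m) - a * b)
      = (n * a - (e * n - (b - m) * k))\<^sup>2 - S\<^sup>2"
    unfolding S2 by (simp add: algebra_simps power2_eq_square)
  moreover have "S\<^sup>2 < (n * a - (e * n - (b - m) * k))\<^sup>2"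
    using na_gt \<open>0 \<le> S\<close> by (simp add: power_strict_mono)
  ultimately show "0 < ((b + m) * k + n * (e - a))\<^sup>2 - 4 * (k * n) * (e * (b + m) - a * b)"
    by simp
qed

definition endemic_poly :: "real \<Rightarrow> real \<Rightarrow> real \<Rightarrow> real \<Rightarrow> real \<Rightarrow> real \<Rightarrow> real \<Rightarrow> real" where
  "endemic_poly a b e g m n y =
     (e * g + 1) * n * y\<^sup>2 + ((b + m) * (e * g + 1) + n * (e - a)) * y + (e * (b + m) - a * b)"

lemma sir_field_zero_at_endemic_root:
  fixes a b e g m n y :: real
  assumes q: "1 + g * y \<noteq> 0" and w: "b + n * y \<noteq> 0" and E: "e + (e * g + 1) * y \<noteq> 0"
    and root: "endemic_poly a b e g m n y = 0"
  shows "sir_field a b e g m n (a * (1 + g * y) / (e + (e * g + 1) * y), y) = 0"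
proof -
  define x where "x = a * (1 + g * y) / (e + (e * g + 1) * y)"
  have xq: "x / (1 + g * y) = a / (e + (e * g + 1) * y)"
    unfolding x_def using q by simp
  have "a * (b + n * y) = (e + (e * g + 1) * y) * (b + n * y + m)"
    using root unfolding endemic_poly_def by (simp add: algebra_simps power2_eq_square)
  then have aE: "a / (e + (e * g + 1) * y) = 1 + m / (b + n * y)"
    using w E by (simp add: field_simps)
  have "x * y / (1 + g * y) = y * (x / (1 + g * y))"
    by simp
  also have "\<dots> = y + m * y / (b + n * y)"
    unfolding xq aE by (simp add: distrib_left)
  finally have "x * y / (1 + g * y) = y + m * y / (b + n * y)" .
  moreover have "e * x + x * y / (1 + g * y) = a"
  proof -
    have "e * x + x * y / (1 + g * y) = x / (1 + g * y) * (e + (e * g + 1) * y)"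
      using q by (simp add: field_simps)
    also have "\<dots> = a"
      using xq E by simp
    finally show ?thesis .
  qed
  ultimately show ?thesis
    unfolding x_def[symmetric] sir_field_def by (simp add: zero_prod_def)
qed

lemma sir_field_has_derivative:
  fixes a b e g m n x y :: real
  assumes q: "1 + g * y \<noteq> 0" and w: "b + n * y \<noteq> 0"
  shows "(sir_field a b e g m n has_derivative (\<lambda>(u, v).
     ((- e - y / (1 + g * y)) * u + - x / (1 + g * y)\<^sup>2 * v,
      y / (1 + g * y) * u + (x / (1 + g * y)\<^sup>2 - 1 - m * b / (b + n * y)\<^sup>2) * v))) (at (x, y))"
proof -
  have F: "sir_field a b e g m n = (\<lambda>z. (a - e * fst z - fst z * snd z / (1 + g * snd z),
       fst z * snd z / (1 + g * snd z) - snd z - m * snd z / (b + n * snd z)))"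
    by (auto simp: sir_field_def fun_eq_iff)
  show ?thesis
    unfolding F
    by (rule has_derivative_eq_rhs, (rule derivative_eq_intros refl | simp add: q w)+)
       (simp add: fun_eq_iff divide_simps q w, simp add: algebra_simps power2_eq_square)
qed

text \<open>The numerator on the right is \<open>y\<close> times the derivative of \<open>endemic_poly\<close> at \<open>y\<close>.\<close>

lemma sir_jacobian_det_at_equilibrium:
  fixes a b e g m n x y :: real
  assumes eq: "sir_field a b e g m n (x, y) = 0"
    and y: "y \<noteq> 0" and q: "1 + g * y \<noteq> 0" and w: "b + n * y \<noteq> 0"
  shows "(- e - y / (1 + g * y)) * (x / (1 + g * y)\<^sup>2 - 1 - m * b / (b + n * y)\<^sup>2)
           - - x / (1 + g * y)\<^sup>2 * (y / (1 + g * y))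
         = y * (2 * (e * g + 1) * n * y + ((b + m) * (e * g + 1) + n * (e - a)))
           / ((1 + g * y) * (b + n * y))"
proof -
  define q w where "q = 1 + g * y" and "w = b + n * y"
  have q0: "q \<noteq> 0" and w0: "w \<noteq> 0"
    using q w by (simp_all add: q_def w_def)
  have eq1: "a = e * x + x * y / q"
   and eq2: "y * (x / q - 1 - m / w) = 0"
    using eq by (simp_all add: sir_field_def zero_prod_def algebra_simps q_def w_def)
  have xq: "x / q = 1 + m / w"
    using eq2 y by simp
  then have x: "x = q * (w + m) / w"
    using q0 w0 by (simp add: field_simps)
  have "e * x + x * y / q = x / q * (e * q + y)"
    using q0 by (simp add: field_simps)
  then have a: "a = (e * q + y) * (w + m) / w"
    using eq1 w0 unfolding xq by (simp add: field_simps)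
  have "(- e - y / q) * (x / q\<^sup>2 - 1 - m * b / w\<^sup>2) - - x / q\<^sup>2 * (y / q)
      = ((e * q + y) * (w\<^sup>2 + m * b) - e * (w + m) * w) / (q * w\<^sup>2)"
    unfolding x using q0 w0 by (simp add: field_simps power2_eq_square)
  also have "\<dots> = y * ((2 * (e * g + 1) * n * y + (b + m) * (e * g + 1) + n * e) * w
                        - n * ((e * q + y) * (w + m))) / (q * w\<^sup>2)"
    unfolding q_def w_def by (simp add: algebra_simps power2_eq_square)
  also have "\<dots> = y * (2 * (e * g + 1) * n * y + ((b + m) * (e * g + 1) + n * (e - a))) / (q * w)"
    unfolding a using q0 w0 by (simp add: field_simps power2_eq_square)
  finally show ?thesis
    unfolding q_def w_def .
qed

theorem theorem2p3:
  fixes a b e g m n :: real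
  assumes "a > 0" "b > 0" "g > 0" "m > 0" "n > 0" "0 < e" "e < 1"
    and "n > ((e * g + 1) * b\<^sup>2 + m * (e * g + 1) * b) / (m * e)"
    and "(e * n - (b - m) * (e * g + 1) + sqrt (4 * m * (e * g + 1) * (n * e - b * (e * g + 1)))) / n < a"
    and "a < e * (m + b) / b"
  defines "a1 \<equiv> (e * g + 1) * n"
    and "a2 \<equiv> (b + m) * (e * g + 1) + n * (e - a)"
    and "a3 \<equiv> e * (b + m) - a * b"
  defines "\<Delta> \<equiv> a2\<^sup>2 - 4 * a1 * a3"
  defines "y2 \<equiv> (- a2 - sqrt \<Delta>) / (2 * a1)"
  defines "x2 \<equiv> a * (1 + g * y2) / (e + (e * g + 1) * y2)"
  shows "saddle_point (sir_field a b e g m n) (x2, y2)"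
proof -
  have "0 < e * g + 1"
    using assms(3,6) by (simp add: add_pos_pos)
  then have a2: "a2 < 0" and disc: "0 < a2\<^sup>2 - 4 * a1 * a3"
    using threshold_coefficient_signs[of b m n e "e * g + 1" a] assms(2-9)
    unfolding a1_def a2_def a3_def by auto
  have a1: "0 < a1"
    unfolding a1_def using \<open>0 < e * g + 1\<close> assms(5) by simp
  have a3: "0 < a3"
    unfolding a3_def using assms(2,10) by (simp add: field_simps)
  have y2: "0 < y2" "a1 * y2\<^sup>2 + a2 * y2 + a3 = 0" "2 * a1 * y2 + a2 < 0"
    using quadratic_smaller_root[OF a1 a2 a3 disc] unfolding y2_def \<Delta>_def by auto
  have q: "0 < 1 + g * y2" and w: "0 < b + n * y2" and E: "0 < e + (e * g + 1) * y2"
    using assms(2,3,5,6) \<open>0 < y2\<close> \<open>0 < e * g + 1\<close> by (simp_all add: add_pos_pos)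
  have nz: "1 + g * y2 \<noteq> 0" "b + n * y2 \<noteq> 0"
    using q w by simp_all
  have F0: "sir_field a b e g m n (x2, y2) = 0"
    unfolding x2_def using q w E y2(2)
    by (intro sir_field_zero_at_endemic_root) (auto simp: endemic_poly_def a1_def a2_def a3_def)
  have P': "2 * (e * g + 1) * n * y2 + ((b + m) * (e * g + 1) + n * (e - a)) = 2 * a1 * y2 + a2"
    unfolding a1_def a2_def by (simp add: algebra_simps)
  have det: "(- e - y2 / (1 + g * y2)) * (x2 / (1 + g * y2)\<^sup>2 - 1 - m * b / (b + n * y2)\<^sup>2)
           - - x2 / (1 + g * y2)\<^sup>2 * (y2 / (1 + g * y2)) < 0"
    using sir_jacobian_det_at_equilibrium[OF F0, unfolded P'] y2 q w
    by (simp add: divide_neg_pos mult_pos_neg)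
  show ?thesis
    unfolding saddle_point_def
    using F0 sir_field_has_derivative[where x = x2, OF nz] matrix2_neg_det_saddle[OF det]
    by blast
qed

end
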